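(* In the setting described in the context (with $n$ sufficiently large), for every parameter $t\ge 0.02$, \[ w_G(Q_t)\le (1+m^{-3})\,w_G(B_2^n). \] In particular, for $t=0.02$ and all sufficiently large $n$, \[ w_G(Q)\le t\,w_G(Q_t)\le 0.05\,w_G(B_2^n). \]
   Context: Let $C_1$ be an absolute constant such that for every sufficiently large $n$ and every $2\le m\le \exp(n/C_1)$ there exist $y_1,\dots,y_m\in\mathbb{R}^n$ with $\frac12\sqrt n\le\|y_i\|\le 2\sqrt n$ and $|\langle y_i,y_j\rangle|\le C_1\sqrt{n\log m}$ for $i\ne j$. Let $C_2$ be an absolute constant such that for all unit vectors $v_1,\dots,v_m\in S^{n-1}$ and $X$ distributed as $N(0,I_n)$, uniformly on $\sqrt n S^{n-1}$, or uniformly on $\sqrt n B_2^n$, one has $\mathbb{P}(\max_{i}|\langle v_i,X\rangle|\ge C_2\sqrt{\log m})\le m^{-10}$. Set $C_0=\max(C_1,100C_2)$. Let $n$ be sufficiently large, $m$ an integer with $C_0 n\le m\le \exp(n/C_0)$, and $\Delta=C_0\sqrt{\log m}$. Let $x_1,\dots,x_m\in\mathbb{R}^n$ be a quasi-orthogonal system, i.e. $\frac{\sqrt n}{2\Delta}\le\|x_i\|\le\frac{2\sqrt n}{\Delta}$ for all $i$ and $|\langle x_i,x_j\rangle|\le \frac{\sqrt n}{\Delta}$ for $i\ne j$. $B_2^n$ is the Euclidean unit ball. Define $Q=\operatorname{conv}\{\pm x_i: i\in[m]\}$ and, for $t>0$, $Q_t=\operatorname{conv}(\frac1t Q\cup B_2^n)$.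 For a compact set $L\subseteq\mathbb{R}^n$, the Gaussian mean width is $w_G(L)=\mathbb{E}\sup_{x\in L}\langle x,G\rangle$ with $G\sim N(0,I_n)$. *)

theory Defs
  imports "HOL-Analysis.Analysis" "HOL-Probability.Probability"
begin

text \<open>Vectors of R^n are represented as functions nat => real that are
extensional on the index set {..<n} (coordinates 0..n-1).\<close>

definition Rn :: "nat \<Rightarrow> (nat \<Rightarrow> real) set" where
  "Rn n = PiE {..<n} (\<lambda>_. UNIV)"

definition ipn :: "nat \<Rightarrow> (nat \<Rightarrow> real) \<Rightarrow> (nat \<Rightarrow> real) \<Rightarrow> real" where
  "ipn n u v = (\<Sum>i<n. u i * v i)"

definition nrmn :: "nat \<Rightarrow> (nat \<Rightarrow> real) \<Rightarrow> real" where
  "nrmn n u = sqrt (ipn n u u)"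

definition unit_ball_n :: "nat \<Rightarrow> (nat \<Rightarrow> real) set" where
  "unit_ball_n n = {x \<in> Rn n. nrmn n x \<le> 1}"

definition conv_hull_n :: "(nat \<Rightarrow> real) set \<Rightarrow> (nat \<Rightarrow> real) set" where
  "conv_hull_n S = {y. \<exists>F c. finite F \<and> F \<subseteq> S \<and> (\<forall>v\<in>F. 0 \<le> c v) \<and> sum c F = 1
        \<and> y = (\<lambda>i. \<Sum>v\<in>F. c v * v i)}"

definition gauss_meas :: "nat \<Rightarrow> (nat \<Rightarrow> real) measure" where
  "gauss_meas n = PiM {..<n} (\<lambda>_. density lborel std_normal_density)"

definition ball_unif_meas :: "nat \<Rightarrow> (nat \<Rightarrow> real) measure" where
  "ball_unif_meas n = uniform_measure (PiM {..<n} (\<lambda>_. lborel))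
      {x \<in> Rn n. nrmn n x \<le> sqrt (real n)}"

text \<open>Uniform (normalized rotation invariant) distribution on sqrt n S^{n-1},
  realised as the law of sqrt n G / |G| for G standard Gaussian.\<close>
definition sphere_unif_meas :: "nat \<Rightarrow> (nat \<Rightarrow> real) measure" where
  "sphere_unif_meas n = distr (gauss_meas n) (PiM {..<n} (\<lambda>_. borel))
      (\<lambda>g. restrict (\<lambda>i. sqrt (real n) * g i / nrmn n g) {..<n})"

definition gauss_width :: "nat \<Rightarrow> (nat \<Rightarrow> real) set \<Rightarrow> real" where
  "gauss_width n L = integral\<^sup>L (gauss_meas n) (\<lambda>g. SUP x\<in>L. ipn n x g)"

definition C1_prop :: "real \<Rightarrow> bool" where
  "C1_prop C1 \<longleftrightarrow> (\<exists>N. \<forall>n\<ge>N. \<forall>m::nat. 2 \<le> m \<and> real m \<le> exp (real n / C1) \<longrightarrow>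
     (\<exists>y::nat \<Rightarrow> nat \<Rightarrow> real.
        (\<forall>i<m. y i \<in> Rn n \<and> sqrt (real n) / 2 \<le> nrmn n (y i) \<and> nrmn n (y i) \<le> 2 * sqrt (real n)) \<and>
        (\<forall>i<m. \<forall>j<m. i \<noteq> j \<longrightarrow> \<bar>ipn n (y i) (y j)\<bar> \<le> C1 * sqrt (real n * ln (real m)))))"

definition C2_prop :: "real \<Rightarrow> bool" where
  "C2_prop C2 \<longleftrightarrow> (\<forall>n m::nat. \<forall>v::nat \<Rightarrow> nat \<Rightarrow> real. \<forall>M.
     1 \<le> m \<longrightarrow> (\<forall>i<m. v i \<in> Rn n \<and> nrmn n (v i) = 1) \<longrightarrow>
     M \<in> {gauss_meas n, sphere_unif_meas n, ball_unif_meas n} \<longrightarrow>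
     measure M {X \<in> space M. (MAX i\<in>{..<m}. \<bar>ipn n (v i) X\<bar>) \<ge> C2 * sqrt (ln (real m))}
       \<le> real m powr (-10))"

definition quasi_orth :: "nat \<Rightarrow> nat \<Rightarrow> real \<Rightarrow> (nat \<Rightarrow> nat \<Rightarrow> real) \<Rightarrow> bool" where
  "quasi_orth n m \<Delta> x \<longleftrightarrow>
     (\<forall>i<m. x i \<in> Rn n \<and> sqrt (real n) / (2 * \<Delta>) \<le> nrmn n (x i)
             \<and> nrmn n (x i) \<le> 2 * sqrt (real n) / \<Delta>) \<and>
     (\<forall>i<m. \<forall>j<m. i \<noteq> j \<longrightarrow> \<bar>ipn n (x i) (x j)\<bar> \<le> sqrt (real n) / \<Delta>)"

definition Qset :: "nat \<Rightarrow> (nat \<Rightarrow> nat \<Rightarrow> real) \<Rightarrow> (nat \<Rightarrow> real) set" where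
  "Qset m x = conv_hull_n (x ` {..<m} \<union> (\<lambda>i. \<lambda>j. - x i j) ` {..<m})"

definition Qt_set :: "nat \<Rightarrow> nat \<Rightarrow> (nat \<Rightarrow> nat \<Rightarrow> real) \<Rightarrow> real \<Rightarrow> (nat \<Rightarrow> real) set" where
  "Qt_set n m x t = conv_hull_n ((\<lambda>y. \<lambda>j. y j / t) ` Qset m x \<union> unit_ball_n n)"

end

(*
  The support function of Q_t at g is max (|g|, h_Q(g) / t), where h_Q(g) = max_i |<x_i, g>| is
  the support function of Q; hence w_G(B_2^n) = E|G| and w_G(Q) = E h_Q(G) <= t w_G(Q_t).
  Write x_i = |x_i| u_i and let Theta = sqrt n G / |G|, which is uniform on sqrt n S^(n-1).
  Then |<x_i, G>| = |x_i| |G| |<u_i, Theta>| / sqrt n, and since |x_i| <= 2 sqrt n / Delta and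
  2 C_2 / C_0 <= 0.02 <= t, we get h_Q(G) <= t |G| unless max_i |<u_i, Theta>| >= C_2 sqrt (log m),
  an event B of probability at most m^-10. On B the integrand exceeds |G| by at most
  (100 sqrt n / Delta) |G|, and Cauchy-Schwarz gives E |G| 1_B <= sqrt n m^-5. The resulting
  excess 100 n m^-5 / Delta is below m^-3 / 2 <= m^-3 E|G| for large n, because m >= C_0 n.
*)

theory Submission
  imports Defs
begin

lemma ipn_self_nonneg: "0 \<le> ipn n g g"
  unfolding ipn_def by (intro sum_nonneg) simp

lemma nrmn_nonneg: "0 \<le> nrmn n g"
  by (simp add: nrmn_def ipn_self_nonneg)

lemma nrmn_power2: "(nrmn n g)\<^sup>2 = (\<Sum>i<n. (g i)\<^sup>2)"
  using ipn_self_nonneg[of n g] by (simp add: nrmn_def ipn_def power2_eq_square)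

lemma abs_ipn_le_nrmn_mult: "\<bar>ipn n u v\<bar> \<le> nrmn n u * nrmn n v"
proof -
  have "(ipn n u v)\<^sup>2 \<le> (nrmn n u * nrmn n v)\<^sup>2"
    unfolding ipn_def power_mult_distrib nrmn_power2 by (rule Cauchy_Schwarz_ineq_sum)
  then show ?thesis
    using nrmn_nonneg[of n u] nrmn_nonneg[of n v]
    by (metis abs_le_square_iff abs_of_nonneg mult_nonneg_nonneg)
qed

lemma abs_component_le_nrmn: "i < n \<Longrightarrow> \<bar>g i\<bar> \<le> nrmn n g"
  unfolding nrmn_def ipn_def
  by (rule real_le_rsqrt) (auto simp: power2_eq_square intro: member_le_sum)

lemma ipn_uminus_left: "ipn n (\<lambda>j. - y j) g = - ipn n y g"
  by (simp add: ipn_def sum_negf)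

lemma ipn_divide_left: "ipn n (\<lambda>j. y j / t) g = ipn n y g / t"
  by (simp add: ipn_def sum_divide_distrib)

definition unit_dir :: "nat \<Rightarrow> (nat \<Rightarrow> real) \<Rightarrow> nat \<Rightarrow> real" where
  "unit_dir n g = (\<lambda>i\<in>{..<n}. g i / nrmn n g)"

lemma unit_dir_in_Rn: "unit_dir n g \<in> Rn n"
  by (simp add: unit_dir_def Rn_def)

lemma ipn_unit_dir_left: "ipn n (unit_dir n y) z = ipn n y z / nrmn n y"
  by (simp add: ipn_def unit_dir_def sum_divide_distrib)

lemma ipn_unit_dir_self: "ipn n (unit_dir n g) g = nrmn n g"
  using ipn_self_nonneg[of n g]
  by (simp add: ipn_unit_dir_left nrmn_def real_div_sqrt)

lemma nrmn_unit_dir: "nrmn n (unit_dir n g) = (if nrmn n g = 0 then 0 else 1)"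
proof -
  have "(nrmn n (unit_dir n g))\<^sup>2 = (nrmn n g)\<^sup>2 / (nrmn n g)\<^sup>2"
    by (simp add: nrmn_power2 unit_dir_def power_divide flip: sum_divide_distrib)
  then show ?thesis
    using nrmn_nonneg[of n g] nrmn_nonneg[of n "unit_dir n g"] by (auto simp: power2_eq_1_iff)
qed

lemma unit_dir_in_unit_ball_n: "unit_dir n g \<in> unit_ball_n n"
  by (simp add: unit_ball_n_def unit_dir_in_Rn nrmn_unit_dir)

section \<open>Support functions of the three bodies\<close>

lemma conv_hull_n_superset: "S \<subseteq> conv_hull_n S"
proof
  fix v assume "v \<in> S"
  then show "v \<in> conv_hull_n S"
    unfolding conv_hull_n_def by (intro CollectI exI[of _ "{v}"] exI[of _ "\<lambda>_. 1"]) auto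
qed

lemma ipn_conv_hull_n_le:
  assumes "\<And>v. v \<in> S \<Longrightarrow> ipn n v g \<le> H" and "y \<in> conv_hull_n S"
  shows "ipn n y g \<le> H"
proof -
  obtain F c where F: "finite F" "F \<subseteq> S" "\<forall>v\<in>F. 0 \<le> c v" "sum c F = 1"
    and y: "y = (\<lambda>i. \<Sum>v\<in>F. c v * v i)"
    using assms(2) unfolding conv_hull_n_def by blast
  have "ipn n y g = (\<Sum>i<n. \<Sum>v\<in>F. c v * v i * g i)"
    unfolding ipn_def y by (simp add: sum_distrib_right)
  also have "\<dots> = (\<Sum>v\<in>F. c v * ipn n v g)"
    unfolding ipn_def by (subst sum.swap) (simp add: sum_distrib_left mult.assoc)
  also have "\<dots> \<le> (\<Sum>v\<in>F. c v * H)"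
    using F assms(1) by (intro sum_mono mult_left_mono) auto
  also have "\<dots> = H"
    using F(4) by (simp flip: sum_distrib_right)
  finally show ?thesis .
qed

definition support_Q :: "nat \<Rightarrow> nat \<Rightarrow> (nat \<Rightarrow> nat \<Rightarrow> real) \<Rightarrow> (nat \<Rightarrow> real) \<Rightarrow> real" where
  "support_Q n m x g = (MAX i\<in>{..<m}. \<bar>ipn n (x i) g\<bar>)"

lemma abs_ipn_le_support_Q: "i < m \<Longrightarrow> \<bar>ipn n (x i) g\<bar> \<le> support_Q n m x g"
  unfolding support_Q_def by (rule Max_ge) auto

lemma support_Q_attained:
  assumes "0 < m"
  obtains i where "i < m" "support_Q n m x g = \<bar>ipn n (x i) g\<bar>"
proof -
  have "support_Q n m x g \<in> (\<lambda>i. \<bar>ipn n (x i) g\<bar>) ` {..<m}"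
    unfolding support_Q_def using assms by (intro Max_in) auto
  then show ?thesis using that by auto
qed

lemma support_Q_le:
  assumes "0 < m" "\<And>i. i < m \<Longrightarrow> nrmn n (x i) \<le> R"
  shows "support_Q n m x g \<le> R * nrmn n g"
proof -
  obtain i where "i < m" "support_Q n m x g = \<bar>ipn n (x i) g\<bar>"
    using support_Q_attained[OF assms(1)] .
  then show ?thesis
    using abs_ipn_le_nrmn_mult[of n "x i" g] assms(2) nrmn_nonneg[of n g]
    by (metis mult_right_mono order_trans)
qed

lemma ipn_Qset_le:
  assumes "z \<in> Qset m x"
  shows "ipn n z g \<le> support_Q n m x g"
  using assms unfolding Qset_def
proof (rule ipn_conv_hull_n_le[rotated])
  fix v assume "v \<in> x ` {..<m} \<union> (\<lambda>i j. - x i j) ` {..<m}"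
  then obtain i where "i < m" "v = x i \<or> v = (\<lambda>j. - x i j)" by blast
  then show "ipn n v g \<le> support_Q n m x g"
    using abs_ipn_le_support_Q[of i m n x g] by (auto simp: ipn_uminus_left)
qed

lemma pm_x_in_Qset:
  assumes "i < m"
  shows "x i \<in> Qset m x" "(\<lambda>j. - x i j) \<in> Qset m x"
  using assms conv_hull_n_superset[of "x ` {..<m} \<union> (\<lambda>i j. - x i j) ` {..<m}"]
  unfolding Qset_def by auto

lemma scaled_Qset_subset_Qt_set: "z \<in> Qset m x \<Longrightarrow> (\<lambda>j. z j / t) \<in> Qt_set n m x t"
  unfolding Qt_set_def by (intro subsetD[OF conv_hull_n_superset]) auto

lemma unit_ball_n_subset_Qt_set: "unit_ball_n n \<subseteq> Qt_set n m x t"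
  unfolding Qt_set_def by (rule order_trans[OF Un_upper2 conv_hull_n_superset])

lemma ipn_unit_ball_n_le:
  assumes "v \<in> unit_ball_n n"
  shows "ipn n v g \<le> nrmn n g"
proof -
  have "nrmn n v * nrmn n g \<le> nrmn n g"
    using assms nrmn_nonneg[of n g] by (simp add: unit_ball_n_def mult_left_le_one_le nrmn_nonneg)
  then show ?thesis
    using abs_ipn_le_nrmn_mult[of n v g] by linarith
qed

lemma ipn_Qt_set_le:
  assumes "0 < t" "y \<in> Qt_set n m x t"
  shows "ipn n y g \<le> max (nrmn n g) (support_Q n m x g / t)"
  using assms(2) unfolding Qt_set_def
proof (rule ipn_conv_hull_n_le[rotated])
  fix v assume "v \<in> (\<lambda>y j. y j / t) ` Qset m x \<union> unit_ball_n n"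
  then consider z where "z \<in> Qset m x" "v = (\<lambda>j. z j / t)" | "v \<in> unit_ball_n n"
    by blast
  then show "ipn n v g \<le> max (nrmn n g) (support_Q n m x g / t)"
  proof cases
    case 1
    then have "ipn n v g \<le> support_Q n m x g / t"
      using ipn_Qset_le assms(1) by (simp add: ipn_divide_left divide_right_mono)
    then show ?thesis by linarith
  next
    case 2
    show ?thesis using ipn_unit_ball_n_le[OF 2, of g] by linarith
  qed
qed

lemma cSUP_eq_attained:
  fixes f :: "'a \<Rightarrow> 'b::conditionally_complete_lattice"
  assumes "\<exists>y\<in>L. f y = z" "\<And>y. y \<in> L \<Longrightarrow> f y \<le> z"
  shows "(SUP y\<in>L. f y) = z"
  using assms by (intro cSup_eq_maximum) auto

lemma SUP_unit_ball_n: "(SUP y\<in>unit_ball_n n. ipn n y g) = nrmn n g"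
proof (rule cSUP_eq_attained)
  show "\<exists>y\<in>unit_ball_n n. ipn n y g = nrmn n g"
    using unit_dir_in_unit_ball_n ipn_unit_dir_self by blast
qed (rule ipn_unit_ball_n_le)

lemma ipn_Qset_attains_support_Q:
  assumes "0 < m"
  shows "\<exists>y\<in>Qset m x. ipn n y g = support_Q n m x g"
proof -
  obtain i where i: "i < m" "support_Q n m x g = \<bar>ipn n (x i) g\<bar>"
    using support_Q_attained[OF assms] .
  show ?thesis
  proof (cases "0 \<le> ipn n (x i) g")
    case True
    then show ?thesis
      using i pm_x_in_Qset(1)[OF i(1)] by (intro bexI[of _ "x i"]) auto
  next
    case False
    then show ?thesis
      using i pm_x_in_Qset(2)[OF i(1)] by (intro bexI[of _ "\<lambda>j. - x i j"]) (auto simp: ipn_uminus_left)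
  qed
qed

lemma SUP_Qset: "0 < m \<Longrightarrow> (SUP y\<in>Qset m x. ipn n y g) = support_Q n m x g"
  by (rule cSUP_eq_attained[OF ipn_Qset_attains_support_Q ipn_Qset_le])

lemma SUP_Qt_set:
  assumes "0 < t" "0 < m"
  shows "(SUP y\<in>Qt_set n m x t. ipn n y g) = max (nrmn n g) (support_Q n m x g / t)"
proof (rule cSUP_eq_attained)
  show "ipn n y g \<le> max (nrmn n g) (support_Q n m x g / t)" if "y \<in> Qt_set n m x t" for y
    using ipn_Qt_set_le[OF assms(1) that] .
  obtain z where z: "z \<in> Qset m x" "ipn n z g = support_Q n m x g"
    using ipn_Qset_attains_support_Q[OF assms(2)] by blast
  have "(\<lambda>j. z j / t) \<in> Qt_set n m x t" "unit_dir n g \<in> Qt_set n m x t"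
    using scaled_Qset_subset_Qt_set[OF z(1)] unit_ball_n_subset_Qt_set unit_dir_in_unit_ball_n
    by blast+
  moreover have "ipn n (\<lambda>j. z j / t) g = support_Q n m x g / t" "ipn n (unit_dir n g) g = nrmn n g"
    by (simp_all add: ipn_divide_left z(2) ipn_unit_dir_self)
  ultimately show "\<exists>y\<in>Qt_set n m x t. ipn n y g = max (nrmn n g) (support_Q n m x g / t)"
    by (metis max_def)
qed

section \<open>Gaussian integrals\<close>

text \<open>Cauchy--Schwarz, in the AM--GM form \<open>2 f 1\<^sub>B \<le> a f\<^sup>2 + 1\<^sub>B / a\<close>.\<close>
lemma integral_mult_indicator_le:
  fixes f :: "'a \<Rightarrow> real"
  assumes "finite_measure M" "integrable M f" "integrable M (\<lambda>x. (f x)\<^sup>2)" "B \<in> sets M"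
    and S: "(\<integral>x. (f x)\<^sup>2 \<partial>M) \<le> S" and p: "measure M B \<le> p" and "0 < S" "0 < p"
  shows "(\<integral>x. f x * indicator B x \<partial>M) \<le> sqrt (S * p)"
proof -
  define a where "a = sqrt (p / S)"
  have a: "0 < a" using assms(7,8) by (simp add: a_def)
  have pointwise: "f x * indicator B x \<le> (a * (f x)\<^sup>2 + indicator B x / a) / 2" for x
  proof -
    have "0 \<le> (a * f x - indicator B x)\<^sup>2 / a" using a by simp
    also have "\<dots> = a * (f x)\<^sup>2 - 2 * f x * indicator B x + indicator B x / a"
      using a by (simp add: power2_eq_square field_simps indicator_def)
    finally show ?thesis by simp
  qed
  have ind: "integrable M (indicator B :: 'a \<Rightarrow> real)"
    using assms(1,4)
    by (intro integrable_real_indicator) (simp_all add: finite_measure.emeasure_finite less_top[symmetric])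
  have "(\<integral>x. f x * indicator B x \<partial>M) \<le> (\<integral>x. (a * (f x)\<^sup>2 + indicator B x / a) / 2 \<partial>M)"
    using pointwise assms(2-4) ind by (intro integral_mono integrable_real_mult_indicator) auto
  also have "\<dots> = (a * (\<integral>x. (f x)\<^sup>2 \<partial>M) + measure M B / a) / 2"
    using assms(3,4) ind by simp
  also have "\<dots> \<le> (a * S + p / a) / 2"
    using S p a by (intro divide_right_mono add_mono mult_left_mono divide_right_mono) auto
  also have "\<dots> = sqrt (S * p)"
    using assms(7,8) by (simp add: a_def real_sqrt_divide real_sqrt_mult field_simps)
  finally show ?thesis .
qed

abbreviation std_normal :: "real measure" where
  "std_normal \<equiv> density lborel (\<lambda>x. ennreal (std_normal_density x))"

lemma prob_space_std_normal: "prob_space std_normal"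
  by (rule prob_space_normal_density) auto

lemma prob_space_gauss_meas: "prob_space (gauss_meas n)"
  unfolding gauss_meas_def by (rule prob_space_PiM) (rule prob_space_std_normal)

lemma space_gauss_meas: "space (gauss_meas n) = Rn n"
  by (simp add: gauss_meas_def space_PiM Rn_def)

lemma measurable_gauss_meas_component:
  "i < n \<Longrightarrow> (\<lambda>g. g i) \<in> measurable (gauss_meas n) std_normal"
  unfolding gauss_meas_def by (rule measurable_component_singleton) auto

lemma borel_measurable_gauss_meas_component[measurable]:
  "(\<lambda>g. g i) \<in> borel_measurable (gauss_meas n)"
proof (cases "i < n")
  case True
  then show ?thesis using measurable_gauss_meas_component by (simp add: measurable_def)
next
  case False
  then have "\<forall>g\<in>space (gauss_meas n). g i = undefined"
    by (auto simp: space_gauss_meas Rn_def PiE_def extensional_def)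
  then show ?thesis
    by (metis (no_types, lifting) borel_measurable_const measurable_cong)
qed

lemma distr_gauss_meas_component:
  "i < n \<Longrightarrow> distr (gauss_meas n) std_normal (\<lambda>g. g i) = std_normal"
  unfolding gauss_meas_def by (rule distr_PiM_component) (auto intro: prob_space_std_normal)

lemma
  fixes f :: "real \<Rightarrow> real"
  assumes "f \<in> borel_measurable borel" "i < n"
  shows integral_gauss_meas_component: "(\<integral>g. f (g i) \<partial>gauss_meas n) = (\<integral>y. f y \<partial>std_normal)"
    and integrable_gauss_meas_component: "integrable (gauss_meas n) (\<lambda>g. f (g i)) = integrable std_normal f"
  using integral_distr[OF measurable_gauss_meas_component[OF assms(2)], of f]
    integrable_distr_eq[OF measurable_gauss_meas_component[OF assms(2)], of f]
  by (simp_all add: assms distr_gauss_meas_component)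

lemma integrable_std_normal_square: "integrable std_normal (\<lambda>y. y\<^sup>2)"
proof -
  have "integrable lborel (\<lambda>x. std_normal_density x * x ^ (2 * 1))"
    by (rule integrable_std_normal_moment)
  then show ?thesis
    by (subst integrable_density) (auto simp: normal_density_nonneg)
qed

lemma integral_std_normal_square: "(\<integral>y. y\<^sup>2 \<partial>std_normal) = 1"
  using integral_std_normal_moment_even[of 1] by (simp add: integral_density normal_density_nonneg)

lemma integral_std_normal_abs: "(\<integral>y. \<bar>y\<bar> \<partial>std_normal) = sqrt (2 / pi)"
  using integral_std_normal_moment_abs_odd[of 0] by (simp add: integral_density normal_density_nonneg)

lemma borel_measurable_ipn[measurable]: "(\<lambda>g. ipn n v g) \<in> borel_measurable (gauss_meas n)"
  unfolding ipn_def by measurable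

lemma borel_measurable_nrmn[measurable]: "nrmn n \<in> borel_measurable (gauss_meas n)"
  unfolding nrmn_def ipn_def by measurable

lemma borel_measurable_support_Q[measurable]:
  "support_Q n m x \<in> borel_measurable (gauss_meas n)"
  unfolding support_Q_def by measurable

lemma integrable_nrmn_square: "integrable (gauss_meas n) (\<lambda>g. (nrmn n g)\<^sup>2)"
  unfolding nrmn_power2
  using integrable_gauss_meas_component[of "\<lambda>y. y\<^sup>2"] integrable_std_normal_square
  by (intro Bochner_Integration.integrable_sum) simp

lemma integral_nrmn_square: "(\<integral>g. (nrmn n g)\<^sup>2 \<partial>gauss_meas n) = real n"
  unfolding nrmn_power2
  using integrable_gauss_meas_component[of "\<lambda>y. y\<^sup>2"] integrable_std_normal_square
    integral_gauss_meas_component[of "\<lambda>y. y\<^sup>2"] integral_std_normal_square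
  by (subst Bochner_Integration.integral_sum) auto

lemma integrable_nrmn: "integrable (gauss_meas n) (nrmn n)"
  using finite_measure.square_integrable_imp_integrable[OF
      prob_space.finite_measure[OF prob_space_gauss_meas] borel_measurable_nrmn integrable_nrmn_square] .

lemma integral_nrmn_ge:
  assumes "0 < n"
  shows "sqrt (2 / pi) \<le> (\<integral>g. nrmn n g \<partial>gauss_meas n)"
proof -
  have "sqrt (2 / pi) = (\<integral>g. \<bar>g 0\<bar> \<partial>gauss_meas n)"
    using integral_gauss_meas_component[of abs 0 n] assms integral_std_normal_abs by simp
  also have "\<dots> \<le> (\<integral>g. nrmn n g \<partial>gauss_meas n)"
    using abs_component_le_nrmn[of 0 n] assms integrable_nrmn nrmn_nonneg
    by (intro integral_mono') auto
  finally show ?thesis .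
qed

lemma integrable_support_Q:
  assumes "0 < m"
  shows "integrable (gauss_meas n) (support_Q n m x)"
proof (rule Bochner_Integration.integrable_bound[OF _ _ AE_I2])
  define R where "R = (MAX i\<in>{..<m}. nrmn n (x i))"
  show "integrable (gauss_meas n) (\<lambda>g. R * nrmn n g)"
    using integrable_nrmn by simp
  fix g
  have "0 \<le> support_Q n m x g"
    using abs_ipn_le_support_Q[of 0 m n x g] assms by simp
  moreover have "support_Q n m x g \<le> R * nrmn n g"
    using assms by (intro support_Q_le) (auto simp: R_def)
  ultimately show "norm (support_Q n m x g) \<le> norm (R * nrmn n g)"
    by simp
qed simp

section \<open>The correlated event\<close>

definition sphere_proj :: "nat \<Rightarrow> (nat \<Rightarrow> real) \<Rightarrow> nat \<Rightarrow> real" where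
  "sphere_proj n g = (\<lambda>i\<in>{..<n}. sqrt (real n) * g i / nrmn n g)"

lemma measurable_sphere_proj:
  "sphere_proj n \<in> measurable (gauss_meas n) (PiM {..<n} (\<lambda>_. borel))"
  unfolding sphere_proj_def by measurable

lemma ipn_sphere_proj_right: "ipn n y (sphere_proj n g) = sqrt (real n) * ipn n y g / nrmn n g"
  by (simp add: ipn_def sphere_proj_def sum_divide_distrib sum_distrib_left mult.left_commute)

definition correlated_event :: "nat \<Rightarrow> nat \<Rightarrow> (nat \<Rightarrow> nat \<Rightarrow> real) \<Rightarrow> real \<Rightarrow> (nat \<Rightarrow> real) set" where
  "correlated_event n m v c =
     {g \<in> space (gauss_meas n). c \<le> (MAX i\<in>{..<m}. \<bar>ipn n (v i) (sphere_proj n g)\<bar>)}"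

lemma correlated_event_eq_vimage:
  "correlated_event n m v c = sphere_proj n -` {X \<in> space (PiM {..<n} (\<lambda>_. borel)).
     c \<le> (MAX i\<in>{..<m}. \<bar>ipn n (v i) X\<bar>)} \<inter> space (gauss_meas n)"
  using measurable_space[OF measurable_sphere_proj] by (auto simp: correlated_event_def)

lemma sets_correlated_event: "correlated_event n m v c \<in> sets (gauss_meas n)"
  unfolding correlated_event_eq_vimage
  by (rule measurable_sets[OF measurable_sphere_proj]) (unfold ipn_def, measurable)

lemma measure_correlated_event_le:
  assumes "C2_prop C2" "1 \<le> m" "\<And>i. i < m \<Longrightarrow> v i \<in> Rn n \<and> nrmn n (v i) = 1"
  shows "measure (gauss_meas n) (correlated_event n m v (C2 * sqrt (ln (real m)))) \<le> real m powr -10"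
proof -
  define A where "A = {X \<in> space (PiM {..<n} (\<lambda>_. borel)).
    C2 * sqrt (ln (real m)) \<le> (MAX i\<in>{..<m}. \<bar>ipn n (v i) X\<bar>)}"
  have A: "A \<in> sets (PiM {..<n} (\<lambda>_. borel))"
    unfolding A_def ipn_def by measurable
  have "sphere_unif_meas n = distr (gauss_meas n) (PiM {..<n} (\<lambda>_. borel)) (sphere_proj n)"
    by (simp add: sphere_unif_meas_def sphere_proj_def[abs_def])
  then have "measure (gauss_meas n) (correlated_event n m v (C2 * sqrt (ln (real m))))
      = measure (sphere_unif_meas n) A"
    using measure_distr[OF measurable_sphere_proj A] by (simp add: correlated_event_eq_vimage A_def)
  also have "\<dots> \<le> real m powr -10"
    using assms(1)[unfolded C2_prop_def, rule_format, where n = n and m = m and v = v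
        and M = "sphere_unif_meas n"] assms(2,3)
    by (simp add: A_def sphere_unif_meas_def)
  finally show ?thesis .
qed

lemma C2_prop_pos:
  assumes "C2_prop C2"
  shows "0 < C2"
proof (rule ccontr)
  assume "\<not> 0 < C2"
  define v :: "nat \<Rightarrow> nat \<Rightarrow> real" where "v = (\<lambda>_. \<lambda>_\<in>{..<1}. 1)"
  have v: "\<forall>i<2. v i \<in> Rn 1 \<and> nrmn 1 (v i) = 1"
    by (simp add: v_def Rn_def nrmn_def ipn_def)
  have "0 \<le> (MAX i\<in>{..<2::nat}. \<bar>ipn 1 (v i) X\<bar>)" for X
  proof -
    have "\<bar>ipn 1 (v 0) X\<bar> \<le> (MAX i\<in>{..<2::nat}. \<bar>ipn 1 (v i) X\<bar>)"
      by (rule Max_ge) auto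
    then show ?thesis by linarith
  qed
  moreover have "C2 * sqrt (ln 2) \<le> 0"
    using \<open>\<not> 0 < C2\<close> by (simp add: mult_nonpos_nonneg)
  ultimately have "{X \<in> space (gauss_meas 1). C2 * sqrt (ln (real 2)) \<le> (MAX i\<in>{..<2}. \<bar>ipn 1 (v i) X\<bar>)}
      = space (gauss_meas 1)"
    by (auto intro: order_trans)
  then have "1 \<le> real 2 powr -10"
    using assms[unfolded C2_prop_def, rule_format, where n = 1 and m = 2 and v = v and M = "gauss_meas 1"] v
      prob_space.prob_space[OF prob_space_gauss_meas]
    by simp
  then show False
    by (simp add: powr_minus_divide)
qed

lemma abs_ipn_le_of_sphere_proj:
  assumes "0 < n" "\<bar>ipn n (unit_dir n y) (sphere_proj n g)\<bar> \<le> c"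
  shows "\<bar>ipn n y g\<bar> \<le> c * nrmn n y * nrmn n g / sqrt (real n)"
proof (cases "nrmn n y = 0 \<or> nrmn n g = 0")
  case True
  then show ?thesis
    using abs_ipn_le_nrmn_mult[of n y g] by auto
next
  case False
  then have "0 < nrmn n y" "0 < nrmn n g"
    using nrmn_nonneg[of n y] nrmn_nonneg[of n g] by auto
  moreover have "ipn n y g = ipn n (unit_dir n y) (sphere_proj n g) * nrmn n y * nrmn n g / sqrt (real n)"
    using calculation assms(1) by (simp add: ipn_unit_dir_left ipn_sphere_proj_right)
  ultimately show ?thesis
    using assms(2) by (simp add: abs_mult abs_divide divide_right_mono mult_right_mono)
qed

lemma support_Q_le_if_decorrelated:
  assumes x: "quasi_orth n m (C0 * s) x" and "0 < s" "0 < C2" "100 * C2 \<le> C0" "0.02 \<le> t"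
    and "0 < n" "0 < m"
    and decor: "\<And>i. i < m \<Longrightarrow> \<bar>ipn n (unit_dir n (x i)) (sphere_proj n g)\<bar> \<le> C2 * s"
  shows "support_Q n m x g \<le> t * nrmn n g"
proof -
  have C0: "0 < C0" using assms(3,4) by linarith
  have "\<bar>ipn n (x i) g\<bar> \<le> t * nrmn n g" if i: "i < m" for i
  proof -
    have "\<bar>ipn n (x i) g\<bar> \<le> C2 * s * nrmn n (x i) * nrmn n g / sqrt (real n)"
      using abs_ipn_le_of_sphere_proj[OF \<open>0 < n\<close> decor[OF i]] .
    also have "\<dots> \<le> C2 * s * (2 * sqrt (real n) / (C0 * s)) * nrmn n g / sqrt (real n)"
      using x i assms(2,3) nrmn_nonneg[of n g]
      by (intro divide_right_mono mult_right_mono mult_left_mono) (auto simp: quasi_orth_def)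
    also have "\<dots> = 2 * C2 / C0 * nrmn n g"
      using assms(2,6) C0 by (simp add: field_simps)
    also have "\<dots> \<le> t * nrmn n g"
    proof (rule mult_right_mono[OF _ nrmn_nonneg])
      have "C0 * 1 \<le> C0 * (50 * t)"
        using assms(5) C0 by (intro mult_left_mono) auto
      then have "100 * C2 \<le> C0 * (50 * t)"
        using assms(4) by linarith
      then show "2 * C2 / C0 \<le> t"
        using C0 by (simp add: field_simps)
    qed
    finally show ?thesis .
  qed
  then show ?thesis
    using support_Q_attained[OF \<open>0 < m\<close>] by metis
qed

section \<open>Gaussian widths\<close>

lemma gauss_width_unit_ball_n: "gauss_width n (unit_ball_n n) = (\<integral>g. nrmn n g \<partial>gauss_meas n)"
  by (simp add: gauss_width_def SUP_unit_ball_n)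

lemma gauss_width_Qset: "0 < m \<Longrightarrow> gauss_width n (Qset m x) = (\<integral>g. support_Q n m x g \<partial>gauss_meas n)"
  by (simp add: gauss_width_def SUP_Qset)

lemma gauss_width_Qt_set:
  "0 < t \<Longrightarrow> 0 < m \<Longrightarrow>
    gauss_width n (Qt_set n m x t) = (\<integral>g. max (nrmn n g) (support_Q n m x g / t) \<partial>gauss_meas n)"
  by (simp add: gauss_width_def SUP_Qt_set)

lemma gauss_width_unit_ball_n_ge:
  assumes "0 < n"
  shows "1 / 2 \<le> gauss_width n (unit_ball_n n)"
proof -
  have "1 / 2 = sqrt (1 / 4)"
    by (simp add: real_sqrt_divide)
  also have "\<dots> \<le> sqrt (2 / pi)"
    using pi_less_4 by (intro real_sqrt_le_mono) (simp add: field_simps)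
  also have "\<dots> \<le> gauss_width n (unit_ball_n n)"
    unfolding gauss_width_unit_ball_n using assms by (rule integral_nrmn_ge)
  finally show ?thesis .
qed

lemma gauss_width_Qset_le:
  assumes "0 < t" "0 < m"
  shows "gauss_width n (Qset m x) \<le> t * gauss_width n (Qt_set n m x t)"
proof -
  have "(\<integral>g. support_Q n m x g \<partial>gauss_meas n)
      \<le> (\<integral>g. t * max (nrmn n g) (support_Q n m x g / t) \<partial>gauss_meas n)"
  proof (rule integral_mono)
    fix g
    show "support_Q n m x g \<le> t * max (nrmn n g) (support_Q n m x g / t)"
      using assms(1) mult_left_mono[OF max.cobounded2, of t "support_Q n m x g / t" "nrmn n g"]
      by simp
  qed (use assms integrable_nrmn integrable_support_Q in auto)
  then show ?thesis
    using assms by (simp add: gauss_width_Qset gauss_width_Qt_set)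
qed

lemma max_nrmn_support_Q_le:
  assumes C2: "C2_prop C2" and C0: "100 * C2 \<le> C0" and "2 \<le> m" "0 < n" "0.02 \<le> t"
    and x: "quasi_orth n m (C0 * sqrt (ln (real m))) x" and g: "g \<in> space (gauss_meas n)"
  defines "B \<equiv> correlated_event n m (\<lambda>i. unit_dir n (x i)) (C2 * sqrt (ln (real m)))"
  shows "max (nrmn n g) (support_Q n m x g / t)
    \<le> nrmn n g + 100 * sqrt (real n) / (C0 * sqrt (ln (real m))) * (nrmn n g * indicator B g)"
proof (cases "g \<in> B")
  case True
  define R where "R = 2 * sqrt (real n) / (C0 * sqrt (ln (real m)))"
  have "0 < C2" "0 < sqrt (ln (real m))"
    using C2_prop_pos[OF C2] \<open>2 \<le> m\<close> by auto
  then have "0 \<le> R"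
    using C0 by (simp add: R_def)
  have "support_Q n m x g / t \<le> R * nrmn n g / t"
    using x \<open>2 \<le> m\<close> \<open>0.02 \<le> t\<close>
    by (intro divide_right_mono support_Q_le) (auto simp: quasi_orth_def R_def)
  also have "\<dots> \<le> 50 * R * nrmn n g"
  proof -
    have "1 / t \<le> 50"
      using \<open>0.02 \<le> t\<close> by (simp add: field_simps)
    then show ?thesis
      using mult_left_mono[of "1 / t" 50 "R * nrmn n g"] \<open>0 \<le> R\<close> nrmn_nonneg[of n g]
      by (simp add: mult_ac)
  qed
  finally have "support_Q n m x g / t \<le> 50 * R * nrmn n g" .
  moreover have "0 \<le> 50 * R * nrmn n g"
    using \<open>0 \<le> R\<close> nrmn_nonneg[of n g] by simp
  ultimately show ?thesis
    using True nrmn_nonneg[of n g] by (simp add: R_def)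
next
  case False
  have "\<bar>ipn n (unit_dir n (x i)) (sphere_proj n g)\<bar> \<le> C2 * sqrt (ln (real m))" if "i < m" for i
  proof -
    have "\<bar>ipn n (unit_dir n (x i)) (sphere_proj n g)\<bar>
        \<le> (MAX i\<in>{..<m}. \<bar>ipn n (unit_dir n (x i)) (sphere_proj n g)\<bar>)"
      using that by (intro Max_ge) auto
    then show ?thesis
      using False g by (simp add: B_def correlated_event_def)
  qed
  then have "support_Q n m x g \<le> t * nrmn n g"
    using assms C2_prop_pos[OF C2] by (intro support_Q_le_if_decorrelated[OF x]) auto
  then show ?thesis
    using False \<open>0.02 \<le> t\<close> by (simp add: divide_le_eq mult.commute)
qed

lemma quasi_orth_unit_dir:
  assumes "quasi_orth n m \<Delta> x" "0 < \<Delta>" "0 < n" "i < m"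
  shows "unit_dir n (x i) \<in> Rn n \<and> nrmn n (unit_dir n (x i)) = 1"
proof -
  have "0 < sqrt (real n) / (2 * \<Delta>)"
    using assms(2,3) by simp
  also have "\<dots> \<le> nrmn n (x i)"
    using assms(1,4) by (simp add: quasi_orth_def)
  finally show ?thesis
    by (simp add: unit_dir_in_Rn nrmn_unit_dir)
qed

lemma integral_nrmn_indicator_le:
  assumes "B \<in> sets (gauss_meas n)" "measure (gauss_meas n) B \<le> p" "0 < p" "0 < n"
  shows "(\<integral>g. nrmn n g * indicator B g \<partial>gauss_meas n) \<le> sqrt (real n * p)"
  using prob_space.finite_measure[OF prob_space_gauss_meas] integrable_nrmn integrable_nrmn_square assms
  by (intro integral_mult_indicator_le) (auto simp: integral_nrmn_square)

lemma gauss_width_Qt_set_le: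
  assumes C2: "C2_prop C2" and C0: "100 * C2 \<le> C0" and m: "2 \<le> m" and n: "0 < n"
    and t: "0.02 \<le> t" and x: "quasi_orth n m (C0 * sqrt (ln (real m))) x"
  shows "gauss_width n (Qt_set n m x t)
    \<le> gauss_width n (unit_ball_n n) + 100 * real n / (C0 * sqrt (ln (real m))) * real m powr -5"
proof -
  define s where "s = sqrt (ln (real m))"
  define K where "K = 100 * sqrt (real n) / (C0 * s)"
  define B where "B = correlated_event n m (\<lambda>i. unit_dir n (x i)) (C2 * s)"
  have tm: "0 < t" "0 < m" and s: "0 < s" and "0 < C0"
    using t m C2_prop_pos[OF C2] C0 by (auto simp: s_def)
  have B: "B \<in> sets (gauss_meas n)" "measure (gauss_meas n) B \<le> real m powr -10"
    unfolding B_def s_def using C2 m quasi_orth_unit_dir[OF x] s \<open>0 < C0\<close> n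
    by (auto simp: s_def intro: sets_correlated_event measure_correlated_event_le)
  have int_B: "integrable (gauss_meas n) (\<lambda>g. nrmn n g * indicator B g)"
    using B(1) integrable_nrmn by (rule integrable_real_mult_indicator)
  have "gauss_width n (Qt_set n m x t)
      \<le> (\<integral>g. nrmn n g + K * (nrmn n g * indicator B g) \<partial>gauss_meas n)"
    unfolding gauss_width_Qt_set[OF tm]
  proof (intro integral_mono)
    show "max (nrmn n g) (support_Q n m x g / t) \<le> nrmn n g + K * (nrmn n g * indicator B g)"
      if "g \<in> space (gauss_meas n)" for g
      unfolding K_def B_def s_def using assms that by (rule max_nrmn_support_Q_le)
  qed (use tm integrable_nrmn integrable_support_Q int_B in auto)
  also have "\<dots> = gauss_width n (unit_ball_n n) + K * (\<integral>g. nrmn n g * indicator B g \<partial>gauss_meas n)"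
    using integrable_nrmn int_B by (simp add: gauss_width_unit_ball_n)
  also have "\<dots> \<le> gauss_width n (unit_ball_n n) + K * sqrt (real n * real m powr -10)"
    using integral_nrmn_indicator_le[OF B] n m \<open>0 < C0\<close> s
    by (intro add_left_mono mult_left_mono) (auto simp: K_def)
  also have "K * sqrt (real n * real m powr -10) = 100 * real n / (C0 * s) * real m powr -5"
  proof -
    have "sqrt (real n * real m powr -10) = sqrt (real n) * real m powr -5"
      using m by (simp add: real_sqrt_mult powr_half_sqrt[symmetric] powr_powr)
    then show ?thesis
      by (simp add: K_def)
  qed
  finally show ?thesis
    by (simp add: s_def)
qed

lemma excess_le_half_powr:
  fixes C0 :: real
  assumes C0: "0 < C0" and n: "200 / (C0 ^ 3 * sqrt (ln 2)) \<le> real n" "0 < n"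
    and m: "C0 * real n \<le> real m" "2 \<le> m"
  shows "100 * real n / (C0 * sqrt (ln (real m))) * real m powr -5 \<le> real m powr -3 / 2"
proof -
  have L: "0 < sqrt (ln 2)" "sqrt (ln 2) \<le> sqrt (ln (real m))" "0 < sqrt (ln (real m))"
    using m(2) by auto
  have "200 * real n \<le> C0 ^ 3 * sqrt (ln 2) * real n * real n"
    using n C0 L(1) by (simp add: field_simps)
  also have "\<dots> = C0 * sqrt (ln 2) * (C0 * real n)\<^sup>2"
    by (simp add: power2_eq_square power3_eq_cube)
  also have "\<dots> \<le> C0 * sqrt (ln (real m)) * (real m)\<^sup>2"
    using C0 L n(2) m(1) by (intro mult_mono power_mono) auto
  finally have "100 * real n / (C0 * sqrt (ln (real m))) \<le> (real m)\<^sup>2 / 2"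
    using C0 L by (simp add: field_simps)
  then have "100 * real n / (C0 * sqrt (ln (real m))) * real m powr -5
      \<le> (real m)\<^sup>2 / 2 * real m powr -5"
    by (rule mult_right_mono) simp
  also have "(real m)\<^sup>2 / 2 * real m powr -5 = real m powr -3 / 2"
    using m(2) by (simp add: powr_minus_divide field_simps flip: power_add)
  finally show ?thesis .
qed

lemma gauss_width_Qt_set_le_powr:
  assumes "C2_prop C2" "100 * C2 \<le> C0" "200 / (C0 ^ 3 * sqrt (ln 2)) \<le> real n" "0 < n"
    and "C0 * real n \<le> real m" "2 \<le> m" "quasi_orth n m (C0 * sqrt (ln (real m))) x" "0.02 \<le> t"
  shows "gauss_width n (Qt_set n m x t) \<le> (1 + real m powr -3) * gauss_width n (unit_ball_n n)"
proof -
  have "0 < C0"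
    using assms(1,2) C2_prop_pos by fastforce
  have "gauss_width n (Qt_set n m x t)
      \<le> gauss_width n (unit_ball_n n) + 100 * real n / (C0 * sqrt (ln (real m))) * real m powr -5"
    using assms by (intro gauss_width_Qt_set_le)
  also have "\<dots> \<le> gauss_width n (unit_ball_n n) + real m powr -3 * (1 / 2)"
    using excess_le_half_powr[OF \<open>0 < C0\<close> assms(3-6)] by simp
  also have "\<dots> \<le> gauss_width n (unit_ball_n n) + real m powr -3 * gauss_width n (unit_ball_n n)"
    using gauss_width_unit_ball_n_ge[OF assms(4)] by (intro add_left_mono mult_left_mono) auto
  finally show ?thesis
    by (simp add: algebra_simps)
qed

lemma gauss_width_Qt_set_le_twice:
  assumes "C2_prop C2" "100 * C2 \<le> C0" "200 / (C0 ^ 3 * sqrt (ln 2)) \<le> real n" "0 < n"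
    and "C0 * real n \<le> real m" "2 \<le> m" "quasi_orth n m (C0 * sqrt (ln (real m))) x" "0.02 \<le> t"
  shows "gauss_width n (Qt_set n m x t) \<le> 2 * gauss_width n (unit_ball_n n)"
proof -
  have "(1 + real m powr -3) * gauss_width n (unit_ball_n n) \<le> 2 * gauss_width n (unit_ball_n n)"
    using assms(6) gauss_width_unit_ball_n_ge[OF assms(4)]
    by (intro mult_right_mono) (auto simp: powr_minus_divide)
  then show ?thesis
    by (rule order_trans[OF gauss_width_Qt_set_le_powr[OF assms]])
qed

theorem lemma3p3:
  fixes C1 C2 :: real
  assumes "C1_prop C1" and "C2_prop C2"
  shows "\<exists>N::nat. \<forall>n\<ge>N. \<forall>(m::nat) (x::nat \<Rightarrow> nat \<Rightarrow> real).
     max C1 (100 * C2) * real n \<le> real m \<longrightarrow> real m \<le> exp (real n / max C1 (100 * C2)) \<longrightarrow>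
     quasi_orth n m (max C1 (100 * C2) * sqrt (ln (real m))) x \<longrightarrow>
       (\<forall>t::real. t \<ge> 0.02 \<longrightarrow>
          gauss_width n (Qt_set n m x t) \<le> (1 + real m powr (-3)) * gauss_width n (unit_ball_n n))
     \<and> gauss_width n (Qset m x) \<le> 0.02 * gauss_width n (Qt_set n m x 0.02)
     \<and> 0.02 * gauss_width n (Qt_set n m x 0.02) \<le> 0.05 * gauss_width n (unit_ball_n n)"
proof -
  \<comment> \<open>\<open>C1_prop\<close> and the bound \<open>m \<le> exp (n / C0)\<close> only guarantee that quasi-orthogonal systems
    exist; the estimate does not need them.\<close>
  define C0 where "C0 = max C1 (100 * C2)"
  have C0: "100 * C2 \<le> C0" "0 < C0"
    using C2_prop_pos[OF assms(2)] by (auto simp: C0_def)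
  obtain N :: nat where N: "200 / (C0 ^ 3 * sqrt (ln 2)) + 2 / C0 < real N"
    using reals_Archimedean2 by blast
  show ?thesis
    unfolding C0_def[symmetric]
  proof (intro exI[of _ N] allI impI)
    fix n m :: nat and x :: "nat \<Rightarrow> nat \<Rightarrow> real"
    assume "N \<le> n" and m: "C0 * real n \<le> real m" and x: "quasi_orth n m (C0 * sqrt (ln (real m))) x"
    have "200 / (C0 ^ 3 * sqrt (ln 2)) + 2 / C0 < real n"
      using N \<open>N \<le> n\<close> by (meson less_le_trans of_nat_le_iff)
    moreover have "0 \<le> 200 / (C0 ^ 3 * sqrt (ln 2))" "0 \<le> 2 / C0"
      using C0(2) by simp_all
    ultimately have n: "200 / (C0 ^ 3 * sqrt (ln 2)) \<le> real n" "2 / C0 \<le> real n" "0 < n"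
      by linarith+
    then have "2 \<le> m"
      using m C0 by (simp add: field_simps)
    show "(\<forall>t. 0.02 \<le> t \<longrightarrow> gauss_width n (Qt_set n m x t)
          \<le> (1 + real m powr -3) * gauss_width n (unit_ball_n n))
        \<and> gauss_width n (Qset m x) \<le> 0.02 * gauss_width n (Qt_set n m x 0.02)
        \<and> 0.02 * gauss_width n (Qt_set n m x 0.02) \<le> 0.05 * gauss_width n (unit_ball_n n)"
      using gauss_width_Qt_set_le_powr[OF assms(2) C0(1) n(1,3) m \<open>2 \<le> m\<close> x]
        gauss_width_Qt_set_le_twice[OF assms(2) C0(1) n(1,3) m \<open>2 \<le> m\<close> x, of "0.02"]
        gauss_width_Qset_le[of "0.02" m n x] gauss_width_unit_ball_n_ge[OF n(3)] \<open>2 \<le> m\<close>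
      by auto
  qed
qed

end
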